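(* Let $(X,f)$ be a dynamical system and let $\mathcal{F}\subset\mathcal{F}_{inf}$ be a proper translation $+$ invariant Furstenberg family. Then $(X,f)$ is $\mathcal{F}$-transitive if and only if $(X,f)$ is $\nabla(\mathcal{F})$-point transitive.
   Context: A dynamical system is a pair $(X,f)$ with $X$ a compact metric space and $f:X\to X$ continuous. $\mathbb{N}=\{1,2,\dots\}$, $\mathbb{Z}_+=\{0,1,2,\dots\}$. For $U,V\subset X$ and $x\in X$: $N(U,V)=\{n\in\mathbb{N}: U\cap f^{-n}(V)\neq\emptyset\}$ and $N(x,U)=\{n\in\mathbb{N}: f^n(x)\in U\}$. A Furstenberg family is a collection $\mathcal{F}$ of subsets of $\mathbb{N}$ such that $F_1\subset F_2$ and $F_1\in\mathcal{F}$ imply $F_2\in\mathcal{F}$; it is proper if it is neither empty nor the collection of all subsets of $\mathbb{N}$; it is translation $+$ invariant if $F+n\in\mathcal{F}$ for all $F\in\mathcal{F}$ and $n\in\mathbb{Z}_+$, where $F+n=\{k+n:k\in F\}$. $\mathcal{F}_{inf}$ is the family of all infinite subsets of $\mathbb{N}$. $(X,f)$ is $\mathcal{F}$-transitive if $N(U,V)\in\mathcal{F}$ for all non-empty open $U,V\subset X$. A point $x$ is an $\mathcal{F}$-transitive point if $N(x,U)\in\mathcal{F}$ for every non-empty open $U$; $(X,f)$ is $\mathcal{F}$-point transitive if such a point exists. For $F\subset\mathbb{N}$, $F-F=\{a-b: a,b\in F,\ a>b\}$, and $\nabla(\mathcal{F})=\{F\subset\mathbb{N}: F-F\in\mathcal{F}\}$.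 *)

theory Defs
  imports "HOL-Analysis.Analysis"
begin

text \<open>Subsets of the positive integers are modelled as subsets of {1..} :: nat set.\<close>

definition dynamical_system :: "'a::metric_space set \<Rightarrow> ('a \<Rightarrow> 'a) \<Rightarrow> bool" where
  "dynamical_system X f \<longleftrightarrow> compact X \<and> continuous_on X f \<and> f ` X \<subseteq> X"

definition furstenberg_family :: "nat set set \<Rightarrow> bool" where
  "furstenberg_family \<F> \<longleftrightarrow> \<F> \<subseteq> Pow {1..} \<and>
     (\<forall>F1 F2. F1 \<subseteq> F2 \<and> F2 \<subseteq> {1..} \<and> F1 \<in> \<F> \<longrightarrow> F2 \<in> \<F>)"

definition proper_family :: "nat set set \<Rightarrow> bool" where
  "proper_family \<F> \<longleftrightarrow> \<F> \<noteq> {} \<and> \<F> \<noteq> Pow {1..}"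

definition translation_plus_invariant :: "nat set set \<Rightarrow> bool" where
  "translation_plus_invariant \<F> \<longleftrightarrow> (\<forall>F\<in>\<F>. \<forall>n::nat. (\<lambda>k. k + n) ` F \<in> \<F>)"

definition F_inf :: "nat set set" where
  "F_inf = {F. F \<subseteq> {1..} \<and> infinite F}"

definition hitting_times :: "('a \<Rightarrow> 'a) \<Rightarrow> 'a set \<Rightarrow> 'a set \<Rightarrow> nat set" where
  "hitting_times f U V = {n. n \<ge> 1 \<and> (\<exists>x\<in>U. (f ^^ n) x \<in> V)}"

definition visit_times :: "('a \<Rightarrow> 'a) \<Rightarrow> 'a \<Rightarrow> 'a set \<Rightarrow> nat set" where
  "visit_times f x U = {n. n \<ge> 1 \<and> (f ^^ n) x \<in> U}"

definition F_transitive :: "nat set set \<Rightarrow> 'a::topological_space set \<Rightarrow> ('a \<Rightarrow> 'a) \<Rightarrow> bool" where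
  "F_transitive \<F> X f \<longleftrightarrow>
     (\<forall>U V. openin (top_of_set X) U \<and> U \<noteq> {} \<and> openin (top_of_set X) V \<and> V \<noteq> {}
        \<longrightarrow> hitting_times f U V \<in> \<F>)"

definition F_transitive_point :: "nat set set \<Rightarrow> 'a::topological_space set \<Rightarrow> ('a \<Rightarrow> 'a) \<Rightarrow> 'a \<Rightarrow> bool" where
  "F_transitive_point \<F> X f x \<longleftrightarrow> x \<in> X \<and>
     (\<forall>U. openin (top_of_set X) U \<and> U \<noteq> {} \<longrightarrow> visit_times f x U \<in> \<F>)"

definition F_point_transitive :: "nat set set \<Rightarrow> 'a::topological_space set \<Rightarrow> ('a \<Rightarrow> 'a) \<Rightarrow> bool" where
  "F_point_transitive \<F> X f \<longleftrightarrow> (\<exists>x. F_transitive_point \<F> X f x)"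

definition diff_set :: "nat set \<Rightarrow> nat set" where
  "diff_set F = {a - b | a b. a \<in> F \<and> b \<in> F \<and> a > b}"

definition nabla :: "nat set set \<Rightarrow> nat set set" where
  "nabla \<F> = {F. F \<subseteq> {1..} \<and> diff_set F \<in> \<F>}"

end

theory Submission
  imports Defs
begin

text \<open>If \<open>(X, f)\<close> is \<open>\<F>\<close>-transitive, it is in particular topologically transitive, so the
  Baire category theorem gives a point \<open>x\<close> whose forward orbit meets every non-empty open set.
  For such \<open>x\<close> every \<open>n \<in> N(U, U)\<close> is a difference of visit times of \<open>x\<close> to \<open>U\<close>: the orbit
  enters the non-empty open set \<open>U \<inter> f\<^sup>-\<^sup>n(U)\<close> at some time \<open>b\<close>, and then \<open>b\<close> and \<open>n + b\<close> lie
  in \<open>N(x, U)\<close>. Since \<open>N(U, U) \<in> \<F>\<close>, upward closure makes \<open>x\<close> a \<open>\<nabla>(\<F>)\<close>-transitive point.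

  Conversely, let \<open>x\<close> be \<open>\<nabla>(\<F>)\<close>-transitive and \<open>U, V\<close> non-empty open. The visit times of \<open>x\<close>
  are infinite, so some \<open>b < a\<close> have \<open>f\<^sup>b x \<in> U\<close> and \<open>f\<^sup>a x \<in> V\<close>; with \<open>m = a - b\<close> the set
  \<open>W = U \<inter> f\<^sup>-\<^sup>m(V)\<close> is non-empty and open. If \<open>b' < a'\<close> are visit times of \<open>x\<close> to \<open>W\<close>, the
  point \<open>f\<^sup>b\<^sup>' x \<in> U\<close> is carried into \<open>V\<close> after \<open>a' - b' + m\<close> steps, so \<open>N(U, V)\<close> contains the
  translate by \<open>m\<close> of \<open>N(x, W) - N(x, W) \<in> \<F>\<close>.\<close>

lemma funpow_mem: "f ` X \<subseteq> X \<Longrightarrow> x \<in> X \<Longrightarrow> (f ^^ n) x \<in> X"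
  by (induction n) auto

lemma funpow_apply_add: "(f ^^ m) ((f ^^ n) x) = (f ^^ (m + n)) x"
  by (simp add: funpow_add)

lemma continuous_on_funpow:
  assumes "continuous_on X f" "f ` X \<subseteq> X"
  shows "continuous_on X (f ^^ n)"
proof (induction n)
  case 0
  then show ?case by simp
next
  case (Suc n)
  have "(f ^^ n) ` X \<subseteq> X"
    using funpow_mem[OF assms(2)] by auto
  then have "continuous_on X (f \<circ> f ^^ n)"
    using Suc.IH assms(1) by (intro continuous_on_compose) (auto intro: continuous_on_subset)
  then show ?case by simp
qed

lemma openin_funpow_preimage:
  assumes "continuous_on X f" "f ` X \<subseteq> X" "openin (top_of_set X) V"
  shows "openin (top_of_set X) (X \<inter> (f ^^ n) -` V)"
  using continuous_openin_preimage[OF continuous_on_funpow[OF assms(1,2)] _ assms(3)]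
    funpow_mem[OF assms(2)] by blast

lemma visit_times_mono: "U \<subseteq> V \<Longrightarrow> visit_times f x U \<subseteq> visit_times f x V"
  unfolding visit_times_def by auto

lemma second_countable_compact_metric:
  fixes X :: "'a::metric_space set"
  assumes "compact X"
  shows "second_countable (top_of_set X)"
proof -
  have "\<exists>C. C \<subseteq> X \<and> finite C \<and> X \<subseteq> (\<Union>c\<in>C. ball c (1 / Suc k))" for k :: nat
  proof -
    have "X \<subseteq> (\<Union>c\<in>X. ball c (1 / Suc k))"
      by auto
    then obtain C where "C \<subseteq> X" "finite C" "X \<subseteq> (\<Union>c\<in>C. ball c (1 / Suc k))"
      using compactE_image[OF assms, of X "\<lambda>c. ball c (1 / Suc k)"] by auto
    then show ?thesis
      by blast
  qed
  then obtain C where C: "\<And>k. C k \<subseteq> X" "\<And>k. finite (C k)"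
    "\<And>k. X \<subseteq> (\<Union>c\<in>C k. ball c (1 / Suc k))"
    by metis
  define \<B> where "\<B> = (\<Union>k. (\<lambda>c. X \<inter> ball c (1 / Suc k)) ` C k)"
  have "\<exists>B\<in>\<B>. y \<in> B \<and> B \<subseteq> U" if U: "openin (top_of_set X) U" "y \<in> U" for U y
  proof -
    obtain T where T: "open T" "U = X \<inter> T"
      using U(1) by (auto simp: openin_open)
    obtain e where e: "e > 0" "ball y e \<subseteq> T"
      using T U(2) open_contains_ball by blast
    obtain k :: nat where "1 / Suc k < e / 2"
      using nat_approx_posE[of "e / 2"] e(1) by auto
    define r where "r = 1 / real (Suc k)"
    have r: "r < e / 2"
      using \<open>1 / Suc k < e / 2\<close> by (simp add: r_def)
    obtain c where c: "c \<in> C k" "dist c y < r"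
      using C(3)[of k] U T by (auto simp: r_def)
    have "ball c r \<subseteq> ball y e"
    proof
      fix z assume "z \<in> ball c r"
      then have "dist c z < r" by simp
      moreover have "dist y z \<le> dist c y + dist c z"
        using dist_triangle[of y z c] by (simp add: dist_commute)
      ultimately show "z \<in> ball y e"
        using r c(2) by simp
    qed
    then have "X \<inter> ball c r \<subseteq> U"
      using e(2) T(2) by blast
    moreover have "y \<in> X \<inter> ball c r"
      using c(2) U T by simp
    moreover have "X \<inter> ball c r \<in> \<B>"
      using c(1) unfolding \<B>_def r_def by blast
    ultimately show ?thesis
      by blast
  qed
  moreover have "countable \<B>"
    unfolding \<B>_def using C(2) by (intro countable_UN) (auto intro: countable_finite)
  moreover have "openin (top_of_set X) B" if "B \<in> \<B>" for B
    using that unfolding \<B>_def by (auto simp: openin_open)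
  ultimately show ?thesis
    unfolding second_countable_def by (intro exI[of _ \<B>]) blast
qed

lemma openin_visiting_points:
  assumes "continuous_on X f" "f ` X \<subseteq> X" "openin (top_of_set X) V"
  shows "openin (top_of_set X) {z \<in> X. visit_times f z V \<noteq> {}}"
proof -
  have "{z \<in> X. visit_times f z V \<noteq> {}} = (\<Union>n\<in>{1..}. X \<inter> (f ^^ n) -` V)"
    unfolding visit_times_def by auto
  moreover have "openin (top_of_set X) (\<Union>n\<in>{1..}. X \<inter> (f ^^ n) -` V)"
    using openin_funpow_preimage[OF assms] by (intro openin_Union) auto
  ultimately show ?thesis
    by simp
qed

lemma transitive_imp_dense_forward_orbit:
  fixes X :: "'a::metric_space set"
  assumes "compact X" "continuous_on X f" "f ` X \<subseteq> X" "X \<noteq> {}"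
    and transitive: "\<And>U V. openin (top_of_set X) U \<Longrightarrow> U \<noteq> {} \<Longrightarrow>
      openin (top_of_set X) V \<Longrightarrow> V \<noteq> {} \<Longrightarrow> hitting_times f U V \<noteq> {}"
  obtains x where "x \<in> X"
    "\<And>U. openin (top_of_set X) U \<Longrightarrow> U \<noteq> {} \<Longrightarrow> visit_times f x U \<noteq> {}"
proof -
  obtain \<B> where \<B>: "countable \<B>" "\<forall>B\<in>\<B>. openin (top_of_set X) B"
    "\<forall>U y. openin (top_of_set X) U \<and> y \<in> U \<longrightarrow> (\<exists>B\<in>\<B>. y \<in> B \<and> B \<subseteq> U)"
    using second_countable_compact_metric[OF assms(1)] unfolding second_countable_def by blast
  define \<G> where "\<G> = (\<lambda>B. {z \<in> X. visit_times f z B \<noteq> {}}) ` (\<B> - {{}})"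
  have dense_open: "openin (top_of_set X) T \<and> top_of_set X closure_of T = X" if T: "T \<in> \<G>" for T
  proof -
    obtain B where B: "B \<in> \<B>" "B \<noteq> {}" "T = {z \<in> X. visit_times f z B \<noteq> {}}"
      using T unfolding \<G>_def by blast
    have "T \<inter> W \<noteq> {}" if W: "openin (top_of_set X) W" "W \<noteq> {}" for W
    proof -
      obtain n z where "n \<ge> 1" "z \<in> W" "(f ^^ n) z \<in> B"
        using transitive[OF W bspec[OF \<B>(2) B(1)] B(2)] unfolding hitting_times_def by blast
      moreover have "z \<in> X"
        using W(1) \<open>z \<in> W\<close> openin_imp_subset by fastforce
      ultimately show ?thesis
        unfolding B(3) visit_times_def by blast
    qed
    then have "top_of_set X closure_of T = topspace (top_of_set X)"
      unfolding dense_intersects_open by blast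
    then show ?thesis
      using openin_visiting_points[OF assms(2,3) bspec[OF \<B>(2) B(1)]] B(3) by simp
  qed
  have "locally_compact_space (top_of_set X) \<and> regular_space (top_of_set X)"
    using assms(1) compact_imp_locally_compact_space compact_space_subtopology
      compactin_euclidean_iff metrizable_imp_regular_space metrizable_space_subtopology
      metrizable_space_euclidean by metis
  moreover have "countable \<G>"
    unfolding \<G>_def using \<B>(1) by simp
  ultimately have "top_of_set X closure_of \<Inter>\<G> = topspace (top_of_set X)"
    by (intro Baire_category) (use dense_open in auto)
  then have "top_of_set X closure_of (X \<inter> \<Inter>\<G>) = X"
    using closure_of_restrict[of "top_of_set X" "\<Inter>\<G>"] by simp
  then obtain x where x: "x \<in> X" "x \<in> \<Inter>\<G>"
    using assms(4) by (metis closure_of_empty IntE ex_in_conv)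
  have "visit_times f x U \<noteq> {}" if U: "openin (top_of_set X) U" "U \<noteq> {}" for U
  proof -
    obtain y where "y \<in> U"
      using U(2) by blast
    then obtain B where B: "B \<in> \<B>" "y \<in> B" "B \<subseteq> U"
      using U(1) \<B>(3) by blast
    then have "{z \<in> X. visit_times f z B \<noteq> {}} \<in> \<G>"
      unfolding \<G>_def by blast
    then have "visit_times f x B \<noteq> {}"
      using x(2) by blast
    then show ?thesis
      using visit_times_mono[OF B(3)] by blast
  qed
  with x(1) that show ?thesis by blast
qed

lemma finite_diff_set:
  assumes "finite N"
  shows "finite (diff_set N)"
proof -
  have "diff_set N \<subseteq> (\<lambda>(a, b). a - b) ` (N \<times> N)"
    unfolding diff_set_def by auto
  then show ?thesis
    using assms finite_subset by blast
qed

lemma hitting_times_subset_diff_set_visit_times: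
  assumes "continuous_on X f" "f ` X \<subseteq> X" "openin (top_of_set X) U"
    and dense_orbit: "\<And>W. openin (top_of_set X) W \<Longrightarrow> W \<noteq> {} \<Longrightarrow> visit_times f x W \<noteq> {}"
  shows "hitting_times f U U \<subseteq> diff_set (visit_times f x U)"
proof
  fix n assume "n \<in> hitting_times f U U"
  then obtain z where z: "n \<ge> 1" "z \<in> U" "(f ^^ n) z \<in> U"
    unfolding hitting_times_def by blast
  define W where "W = U \<inter> (X \<inter> (f ^^ n) -` U)"
  have "openin (top_of_set X) W"
    unfolding W_def using assms(3) openin_funpow_preimage[OF assms(1-3)] by blast
  moreover have "z \<in> W"
    unfolding W_def using z assms(3) openin_imp_subset by fastforce
  ultimately obtain b where b: "b \<ge> 1" "(f ^^ b) x \<in> W"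
    using dense_orbit unfolding visit_times_def by blast
  then have "b \<in> visit_times f x U" "n + b \<in> visit_times f x U"
    unfolding W_def visit_times_def by (auto simp: funpow_apply_add)
  then show "n \<in> diff_set (visit_times f x U)"
    unfolding diff_set_def using z(1) by force
qed

lemma shifted_diff_set_visit_times_subset_hitting_times:
  assumes "W \<subseteq> U" "\<And>y. y \<in> W \<Longrightarrow> (f ^^ m) y \<in> V"
  shows "(\<lambda>k. k + m) ` diff_set (visit_times f x W) \<subseteq> hitting_times f U V"
proof
  fix d assume "d \<in> (\<lambda>k. k + m) ` diff_set (visit_times f x W)"
  then obtain a b where ab: "d = a - b + m" "a > b" "a \<in> visit_times f x W" "b \<in> visit_times f x W"
    unfolding diff_set_def by blast
  have "(f ^^ d) ((f ^^ b) x) = (f ^^ m) ((f ^^ a) x)"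
    using ab(1,2) by (simp add: funpow_apply_add add.commute)
  then have "(f ^^ d) ((f ^^ b) x) \<in> V"
    using ab(3) assms(2) unfolding visit_times_def by simp
  moreover have "(f ^^ b) x \<in> U"
    using ab(4) assms(1) unfolding visit_times_def by blast
  ultimately show "d \<in> hitting_times f U V"
    unfolding hitting_times_def using ab(1,2) by auto
qed

lemma furstenberg_family_superset:
  "furstenberg_family \<F> \<Longrightarrow> A \<in> \<F> \<Longrightarrow> A \<subseteq> B \<Longrightarrow> B \<subseteq> {1..} \<Longrightarrow> B \<in> \<F>"
  unfolding furstenberg_family_def by blast

lemma F_transitive_imp_nabla_point_transitive:
  fixes X :: "'a::metric_space set"
  assumes "dynamical_system X f" "X \<noteq> {}" "furstenberg_family \<F>" "{} \<notin> \<F>"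
    and "F_transitive \<F> X f"
  shows "F_point_transitive (nabla \<F>) X f"
proof -
  have X: "compact X" "continuous_on X f" "f ` X \<subseteq> X"
    using assms(1) unfolding dynamical_system_def by auto
  have hitting: "hitting_times f U V \<in> \<F>"
    if "openin (top_of_set X) U" "U \<noteq> {}" "openin (top_of_set X) V" "V \<noteq> {}" for U V
    using assms(5) that unfolding F_transitive_def by blast
  obtain x where x: "x \<in> X"
    "\<And>U. openin (top_of_set X) U \<Longrightarrow> U \<noteq> {} \<Longrightarrow> visit_times f x U \<noteq> {}"
  proof (rule transitive_imp_dense_forward_orbit[OF X assms(2)])
    show "hitting_times f U V \<noteq> {}"
      if "openin (top_of_set X) U" "U \<noteq> {}" "openin (top_of_set X) V" "V \<noteq> {}" for U V
      using hitting[OF that] assms(4) by fastforce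
  qed (rule that)
  have "visit_times f x U \<in> nabla \<F>" if U: "openin (top_of_set X) U" "U \<noteq> {}" for U
  proof -
    have "hitting_times f U U \<subseteq> diff_set (visit_times f x U)"
      by (rule hitting_times_subset_diff_set_visit_times[OF X(2,3) U(1)]) (rule x(2))
    moreover have "diff_set (visit_times f x U) \<subseteq> {1..}"
      unfolding diff_set_def by auto
    ultimately have "diff_set (visit_times f x U) \<in> \<F>"
      by (rule furstenberg_family_superset[OF assms(3) hitting[OF U U]])
    then show ?thesis
      unfolding nabla_def visit_times_def by auto
  qed
  with x(1) show ?thesis
    unfolding F_point_transitive_def F_transitive_point_def by blast
qed

lemma nabla_point_transitive_imp_F_transitive:
  assumes "continuous_on X f" "f ` X \<subseteq> X"
    and "furstenberg_family \<F>" "\<F> \<subseteq> F_inf" "translation_plus_invariant \<F>"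
    and "F_point_transitive (nabla \<F>) X f"
  shows "F_transitive \<F> X f"
  unfolding F_transitive_def
proof (intro allI impI)
  obtain x where x: "x \<in> X"
    "\<And>U. openin (top_of_set X) U \<Longrightarrow> U \<noteq> {} \<Longrightarrow> diff_set (visit_times f x U) \<in> \<F>"
    using assms(6) unfolding F_point_transitive_def F_transitive_point_def nabla_def by blast
  have infinite_visits: "infinite (visit_times f x U)"
    if "openin (top_of_set X) U" "U \<noteq> {}" for U
    using x(2)[OF that] assms(4) finite_diff_set unfolding F_inf_def by blast
  fix U V
  assume UV: "openin (top_of_set X) U \<and> U \<noteq> {} \<and> openin (top_of_set X) V \<and> V \<noteq> {}"
  obtain b where b: "b \<in> visit_times f x U"
    using infinite_visits[of U] UV by fastforce
  obtain a where a: "a > b" "a \<in> visit_times f x V"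
    using infinite_visits[of V] UV infinite_nat_iff_unbounded by blast
  define m where "m = a - b"
  define W where "W = U \<inter> (X \<inter> (f ^^ m) -` V)"
  have "(f ^^ m) ((f ^^ b) x) = (f ^^ a) x"
    using a(1) by (simp add: m_def funpow_apply_add)
  then have "(f ^^ b) x \<in> W"
    using a(2) b funpow_mem[OF assms(2) x(1)] unfolding W_def visit_times_def by auto
  moreover have "openin (top_of_set X) W"
    unfolding W_def using UV openin_funpow_preimage[OF assms(1,2)] by blast
  ultimately have "(\<lambda>k. k + m) ` diff_set (visit_times f x W) \<in> \<F>"
    using x(2) assms(5) unfolding translation_plus_invariant_def by blast
  moreover have "(\<lambda>k. k + m) ` diff_set (visit_times f x W) \<subseteq> hitting_times f U V"
    by (rule shifted_diff_set_visit_times_subset_hitting_times) (auto simp: W_def)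
  ultimately show "hitting_times f U V \<in> \<F>"
    using furstenberg_family_superset[OF assms(3)] unfolding hitting_times_def by blast
qed

theorem proposition3p6:
  fixes X :: "'a::metric_space set" and f :: "'a \<Rightarrow> 'a" and \<F> :: "nat set set"
  assumes "dynamical_system X f" and "X \<noteq> {}"
    and "furstenberg_family \<F>" and "proper_family \<F>" and "\<F> \<subseteq> F_inf"
    and "translation_plus_invariant \<F>"
  shows "F_transitive \<F> X f \<longleftrightarrow> F_point_transitive (nabla \<F>) X f"
proof
  have "{} \<notin> \<F>"
    using assms(5) unfolding F_inf_def by auto
  then show "F_transitive \<F> X f \<Longrightarrow> F_point_transitive (nabla \<F>) X f"
    using F_transitive_imp_nabla_point_transitive assms(1-3) by blast
next
  have "continuous_on X f" "f ` X \<subseteq> X"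
    using assms(1) unfolding dynamical_system_def by auto
  then show "F_point_transitive (nabla \<F>) X f \<Longrightarrow> F_transitive \<F> X f"
    using nabla_point_transitive_imp_F_transitive assms(3,5,6) by blast
qed

end
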